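(* Let $H$ be a graph and $G=L(H)$. Then $G$ is localizable if and only if $H$ contains an independent set $S$ of strong vertices and a set $\mathcal{T}$ of strong triangles of $H$ that decomposes the graph $H-S$ (i.e., each triangle in $\mathcal{T}$ is a subgraph of $H-S$ and each edge of $H-S$ lies in exactly one triangle of $\mathcal{T}$).
   Context: $L(H)$ is the line graph of $H$. A clique is strong if it intersects every maximal independent set; a graph is localizable if its vertex set admits a partition into strong cliques. A vertex $v$ of $H$ is strong if every maximal matching of $H$ covers $v$. A triangle $T$ of $H$ is strong if every maximal matching of $H$ contains an edge of $T$. *)

theory Defs
  imports Main "HOL-Library.Disjoint_Sets"
begin

definition graph :: "'a set \<Rightarrow> 'a set set \<Rightarrow> bool" where
  "graph V E \<longleftrightarrow> finite V \<and> (\<forall>e\<in>E. e \<subseteq> V \<and> card e = 2)"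

definition independent :: "'a set \<Rightarrow> 'a set set \<Rightarrow> 'a set \<Rightarrow> bool" where
  "independent V E S \<longleftrightarrow> S \<subseteq> V \<and> (\<forall>u\<in>S. \<forall>v\<in>S. {u, v} \<notin> E)"

definition maximal_independent :: "'a set \<Rightarrow> 'a set set \<Rightarrow> 'a set \<Rightarrow> bool" where
  "maximal_independent V E S \<longleftrightarrow>
     independent V E S \<and> (\<forall>T. independent V E T \<and> S \<subseteq> T \<longrightarrow> T = S)"

definition clique :: "'a set \<Rightarrow> 'a set set \<Rightarrow> 'a set \<Rightarrow> bool" where
  "clique V E C \<longleftrightarrow> C \<subseteq> V \<and> (\<forall>u\<in>C. \<forall>v\<in>C. u \<noteq> v \<longrightarrow> {u, v} \<in> E)"

definition strong_clique :: "'a set \<Rightarrow> 'a set set \<Rightarrow> 'a set \<Rightarrow> bool" where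
  "strong_clique V E C \<longleftrightarrow>
     clique V E C \<and> (\<forall>I. maximal_independent V E I \<longrightarrow> C \<inter> I \<noteq> {})"

definition localizable :: "'a set \<Rightarrow> 'a set set \<Rightarrow> bool" where
  "localizable V E \<longleftrightarrow> (\<exists>P. partition_on V P \<and> (\<forall>C\<in>P. strong_clique V E C))"

text \<open>Line graph L(H): vertex set E, two distinct edges adjacent iff they share a vertex.\<close>
definition line_graph_edges :: "'a set set \<Rightarrow> 'a set set set" where
  "line_graph_edges E = {{e, f} | e f. e \<in> E \<and> f \<in> E \<and> e \<noteq> f \<and> e \<inter> f \<noteq> {}}"

definition matching :: "'a set set \<Rightarrow> 'a set set \<Rightarrow> bool" where
  "matching E M \<longleftrightarrow> M \<subseteq> E \<and> (\<forall>e\<in>M. \<forall>f\<in>M. e \<noteq> f \<longrightarrow> e \<inter> f = {})"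

definition maximal_matching :: "'a set set \<Rightarrow> 'a set set \<Rightarrow> bool" where
  "maximal_matching E M \<longleftrightarrow>
     matching E M \<and> (\<forall>N. matching E N \<and> M \<subseteq> N \<longrightarrow> N = M)"

definition strong_vertex :: "'a set set \<Rightarrow> 'a \<Rightarrow> bool" where
  "strong_vertex E v \<longleftrightarrow> (\<forall>M. maximal_matching E M \<longrightarrow> v \<in> \<Union>M)"

definition triangle :: "'a set \<Rightarrow> 'a set set \<Rightarrow> 'a set \<Rightarrow> bool" where
  "triangle V E t \<longleftrightarrow> t \<subseteq> V \<and> card t = 3 \<and> (\<forall>u\<in>t. \<forall>v\<in>t. u \<noteq> v \<longrightarrow> {u, v} \<in> E)"

definition triangle_edges :: "'a set \<Rightarrow> 'a set set" where
  "triangle_edges t = {e. e \<subseteq> t \<and> card e = 2}"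

definition strong_triangle :: "'a set set \<Rightarrow> 'a set \<Rightarrow> bool" where
  "strong_triangle E t \<longleftrightarrow> (\<forall>M. maximal_matching E M \<longrightarrow> M \<inter> triangle_edges t \<noteq> {})"

definition del_vertices_V :: "'a set \<Rightarrow> 'a set \<Rightarrow> 'a set" where
  "del_vertices_V V S = V - S"

definition del_vertices_E :: "'a set set \<Rightarrow> 'a set \<Rightarrow> 'a set set" where
  "del_vertices_E E S = {e \<in> E. e \<inter> S = {}}"

definition triangle_decomposition :: "'a set \<Rightarrow> 'a set set \<Rightarrow> 'a set set \<Rightarrow> bool" where
  "triangle_decomposition V E \<T> \<longleftrightarrow>
     (\<forall>t\<in>\<T>. triangle V E t) \<and> (\<forall>e\<in>E. \<exists>!t. t \<in> \<T> \<and> e \<in> triangle_edges t)"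

end

theory Submission
  imports Defs
begin

text \<open>A clique of the line graph is a family of pairwise intersecting edges, so it lies in a
  star or is the edge set of a triangle. A strong clique C is moreover saturated: an edge outside
  C extends to a maximal matching, which must meet C in an edge disjoint from it. Hence a strong
  clique is the full star of a strong vertex or the edge set of a strong triangle. In a partition
  of E(H) into such blocks the centres of the stars form an independent set S (an edge between
  two centres would lie in two blocks), and the triangle blocks partition the edges of H - S;
  conversely such S and triangles yield a partition of this kind.\<close>

lemma card_2_doubleton_cases:
  assumes "card e = 2" "x \<in> e"
  obtains y where "e = {x, y}" "y \<noteq> x"
  using assms by (auto simp: card_2_iff)

lemma triangle_edges_eq:
  assumes "a \<noteq> b" "a \<noteq> c" "b \<noteq> c"
  shows "triangle_edges {a, b, c} = {{a, b}, {a, c}, {b, c}}"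
  using assms unfolding triangle_edges_def by (auto simp: card_2_iff)

lemma card_3_triangle_edges_cases:
  assumes "card t = 3"
  obtains a b c where "t = {a, b, c}" "a \<noteq> b" "a \<noteq> c" "b \<noteq> c"
    "triangle_edges t = {{a, b}, {a, c}, {b, c}}"
  using assms triangle_edges_eq unfolding card_3_iff by metis

lemma Union_triangle_edges: "card t = 3 \<Longrightarrow> \<Union>(triangle_edges t) = t"
  by (erule card_3_triangle_edges_cases) auto

lemma triangle_edges_avoiding: "card t = 3 \<Longrightarrow> \<exists>e\<in>triangle_edges t. v \<notin> e"
  by (erule card_3_triangle_edges_cases) auto

lemma triangle_edges_through: "card t = 3 \<Longrightarrow> v \<in> t \<Longrightarrow> \<exists>e\<in>triangle_edges t. v \<in> e"
  by (erule card_3_triangle_edges_cases) auto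

lemma subset_if_meets_triangle_edges:
  assumes t: "card t = 3" and h: "card h = 2" and meets: "\<forall>e\<in>triangle_edges t. h \<inter> e \<noteq> {}"
  shows "h \<subseteq> t"
proof (rule ccontr)
  assume "\<not> h \<subseteq> t"
  then obtain x y where xy: "h = {x, y}" "x \<notin> t"
    using h unfolding card_2_iff by blast
  obtain e where e: "e \<in> triangle_edges t" "y \<notin> e"
    using triangle_edges_avoiding[OF t] by blast
  have "e \<subseteq> t" using e(1) unfolding triangle_edges_def by blast
  then show False using meets e xy by blast
qed

lemma pairwise_intersecting_pairs_triangle:
  assumes pairs: "\<And>e. e \<in> C \<Longrightarrow> card e = 2"
    and intersecting: "\<And>e f. e \<in> C \<Longrightarrow> f \<in> C \<Longrightarrow> e \<inter> f \<noteq> {}"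
    and no_common: "\<And>v. \<exists>e\<in>C. v \<notin> e"
  shows "\<exists>t. card t = 3 \<and> C = triangle_edges t"
proof -
  obtain e where e: "e \<in> C" using no_common by blast
  then obtain a b where ab: "e = {a, b}" "a \<noteq> b" using pairs card_2_iff by metis
  obtain f where f: "f \<in> C" "a \<notin> f" using no_common by blast
  then have "b \<in> f" using intersecting[OF f(1) e] ab by blast
  then obtain c where c: "f = {b, c}" "c \<noteq> b"
    using card_2_doubleton_cases pairs f(1) by metis
  have "c \<noteq> a" using c f by blast
  obtain g where g: "g \<in> C" "b \<notin> g" using no_common by blast
  have "a \<in> g" using intersecting[OF g(1) e] ab g(2) by blast
  moreover have "c \<in> g" using intersecting[OF g(1) f(1)] c g(2) by blast
  ultimately have "g = {a, c}"
    using card_2_doubleton_cases[OF pairs[OF g(1)] \<open>a \<in> g\<close>] \<open>c \<noteq> a\<close> by blast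
  define t where "t = {a, b, c}"
  have distinct: "a \<noteq> b" "a \<noteq> c" "b \<noteq> c" using ab c \<open>c \<noteq> a\<close> by auto
  have t: "card t = 3" "triangle_edges t = {e, g, f}"
    unfolding t_def using distinct by (simp, simp add: triangle_edges_eq ab c \<open>g = {a, c}\<close>)
  have "C \<subseteq> triangle_edges t"
  proof
    fix h assume h: "h \<in> C"
    then have "h \<subseteq> t"
      using subset_if_meets_triangle_edges[OF t(1) pairs[OF h]] intersecting[OF h] e f(1) g(1)
      unfolding t(2) by blast
    then show "h \<in> triangle_edges t" using pairs[OF h] unfolding triangle_edges_def by blast
  qed
  moreover have "triangle_edges t \<subseteq> C" using t(2) e f(1) g(1) by simp
  ultimately show ?thesis using t(1) by blast
qed

lemma triangle_edges_subset: "triangle V E t \<Longrightarrow> triangle_edges t \<subseteq> E"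
  unfolding triangle_def triangle_edges_def by (auto simp: card_2_iff)

lemma triangle_del_vertices_iff:
  "triangle (del_vertices_V V S) (del_vertices_E E S) t \<longleftrightarrow> triangle V E t \<and> t \<inter> S = {}"
  unfolding triangle_def del_vertices_V_def del_vertices_E_def by blast

section \<open>Matchings as independent sets of the line graph\<close>

lemma graph_finite_edges: "graph V E \<Longrightarrow> finite E"
  unfolding graph_def by (meson Pow_iff finite_Pow_iff finite_subset subsetI)

lemma doubleton_in_line_graph_edges_iff:
  "{e, f} \<in> line_graph_edges E \<longleftrightarrow> e \<in> E \<and> f \<in> E \<and> e \<noteq> f \<and> e \<inter> f \<noteq> {}"
  unfolding line_graph_edges_def by (auto simp: doubleton_eq_iff)

lemma independent_line_graph_iff_matching:
  "independent E (line_graph_edges E) M \<longleftrightarrow> matching E M"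
  unfolding independent_def matching_def doubleton_in_line_graph_edges_iff by blast

lemma maximal_independent_line_graph_iff_maximal_matching:
  "maximal_independent E (line_graph_edges E) M \<longleftrightarrow> maximal_matching E M"
  unfolding maximal_independent_def maximal_matching_def independent_line_graph_iff_matching
  by simp

lemma clique_line_graph_iff:
  "clique E (line_graph_edges E) C \<longleftrightarrow> C \<subseteq> E \<and> (\<forall>e\<in>C. \<forall>f\<in>C. e \<noteq> f \<longrightarrow> e \<inter> f \<noteq> {})"
  unfolding clique_def doubleton_in_line_graph_edges_iff by blast

lemma strong_clique_line_graph_iff:
  "strong_clique E (line_graph_edges E) C \<longleftrightarrow>
     clique E (line_graph_edges E) C \<and> (\<forall>M. maximal_matching E M \<longrightarrow> C \<inter> M \<noteq> {})"
  unfolding strong_clique_def maximal_independent_line_graph_iff_maximal_matching ..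

lemma maximal_matching_subset: "maximal_matching E M \<Longrightarrow> M \<subseteq> E"
  unfolding maximal_matching_def matching_def by blast

lemma matching_extends_to_maximal_matching:
  assumes "finite E" "matching E M\<^sub>0"
  obtains M where "maximal_matching E M" "M\<^sub>0 \<subseteq> M"
proof -
  define extensions where "extensions = {N. matching E N \<and> M\<^sub>0 \<subseteq> N}"
  have "extensions \<subseteq> Pow E" unfolding extensions_def matching_def by blast
  then have "finite extensions" using assms(1) by (meson finite_Pow_iff finite_subset)
  moreover have "M\<^sub>0 \<in> extensions" using assms(2) unfolding extensions_def by blast
  ultimately obtain M where M: "M \<in> extensions" "\<forall>N\<in>extensions. M \<subseteq> N \<longrightarrow> M = N"
    using finite_has_maximal by blast
  have "maximal_matching E M"
    using M unfolding maximal_matching_def extensions_def by auto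
  then show ?thesis using M(1) that unfolding extensions_def by blast
qed

text \<open>Extend the matching consisting of f alone to a maximal one; it meets C in an edge
  other than f, which must therefore be disjoint from f.\<close>
lemma strong_clique_line_graph_has_disjoint_edge:
  assumes "finite E" "strong_clique E (line_graph_edges E) C" "f \<in> E" "f \<notin> C"
  shows "\<exists>g\<in>C. g \<inter> f = {}"
proof -
  have "matching E {f}" using assms(3) unfolding matching_def by auto
  then obtain M where M: "maximal_matching E M" "f \<in> M"
    using matching_extends_to_maximal_matching[OF assms(1)] by blast
  then obtain g where g: "g \<in> C" "g \<in> M"
    using assms(2) unfolding strong_clique_line_graph_iff by blast
  have "matching E M" using M(1) unfolding maximal_matching_def by blast
  moreover have "g \<noteq> f" using g(1) assms(4) by blast
  ultimately have "g \<inter> f = {}" using g(2) M(2) unfolding matching_def by blast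
  then show ?thesis using g(1) by blast
qed

section \<open>Strong cliques of the line graph\<close>

definition star :: "'a set set \<Rightarrow> 'a \<Rightarrow> 'a set set" where
  "star E v = {e \<in> E. v \<in> e}"

lemma vertex_if_star_nonempty: "graph V E \<Longrightarrow> star E v \<noteq> {} \<Longrightarrow> v \<in> V"
  unfolding graph_def star_def by blast

lemma strong_clique_star_iff:
  "strong_clique E (line_graph_edges E) (star E v) \<longleftrightarrow> strong_vertex E v"
proof -
  have "clique E (line_graph_edges E) (star E v)"
    unfolding clique_line_graph_iff star_def by blast
  moreover have "star E v \<inter> M \<noteq> {} \<longleftrightarrow> v \<in> \<Union>M" if "maximal_matching E M" for M
    using maximal_matching_subset[OF that] unfolding star_def by blast
  ultimately show ?thesis unfolding strong_clique_line_graph_iff strong_vertex_def by blast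
qed

lemma strong_clique_triangle_edges_iff:
  assumes "triangle V E t"
  shows "strong_clique E (line_graph_edges E) (triangle_edges t) \<longleftrightarrow> strong_triangle E t"
proof -
  obtain a b c where "a \<noteq> b" "a \<noteq> c" "b \<noteq> c" "triangle_edges t = {{a, b}, {a, c}, {b, c}}"
    using assms unfolding triangle_def by (metis card_3_triangle_edges_cases)
  then have "clique E (line_graph_edges E) (triangle_edges t)"
    using triangle_edges_subset[OF assms] unfolding clique_line_graph_iff by auto
  then show ?thesis unfolding strong_clique_line_graph_iff strong_triangle_def by blast
qed

lemma strong_vertex_star_nonempty:
  assumes "finite E" "strong_vertex E v"
  shows "star E v \<noteq> {}"
proof -
  have "matching E {}" unfolding matching_def by simp
  then obtain M where "maximal_matching E M"
    using matching_extends_to_maximal_matching[OF assms(1)] by blast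
  then have "v \<in> \<Union>M" "M \<subseteq> E"
    using assms(2) maximal_matching_subset unfolding strong_vertex_def by blast+
  then show ?thesis unfolding star_def by blast
qed

lemma strong_clique_line_graph_eq_star:
  assumes "finite E" "strong_clique E (line_graph_edges E) C" "\<And>e. e \<in> C \<Longrightarrow> v \<in> e"
  shows "C = star E v"
proof
  show "C \<subseteq> star E v"
    using assms(2,3) unfolding strong_clique_def clique_line_graph_iff star_def by blast
  show "star E v \<subseteq> C"
  proof
    fix f assume f: "f \<in> star E v"
    show "f \<in> C"
    proof (rule ccontr)
      assume "f \<notin> C"
      then obtain g where "g \<in> C" "g \<inter> f = {}"
        using strong_clique_line_graph_has_disjoint_edge[OF assms(1,2)] f unfolding star_def by blast
      then show False using assms(3) f unfolding star_def by blast
    qed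
  qed
qed

lemma strong_clique_line_graph_cases:
  assumes G: "graph V E" and strong: "strong_clique E (line_graph_edges E) C"
  shows "(\<exists>v. C = star E v) \<or> (\<exists>t. triangle V E t \<and> C = triangle_edges t)"
proof (cases "\<exists>v. \<forall>e\<in>C. v \<in> e")
  case True
  then show ?thesis using strong_clique_line_graph_eq_star[OF graph_finite_edges[OF G] strong] by blast
next
  case False
  have CE: "C \<subseteq> E" and adjacent: "\<And>e f. e \<in> C \<Longrightarrow> f \<in> C \<Longrightarrow> e \<noteq> f \<Longrightarrow> e \<inter> f \<noteq> {}"
    using strong unfolding strong_clique_def clique_line_graph_iff by blast+
  have pairs: "\<And>e. e \<in> C \<Longrightarrow> card e = 2" and in_V: "\<And>e. e \<in> C \<Longrightarrow> e \<subseteq> V"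
    using G CE unfolding graph_def by blast+
  have "e \<inter> f \<noteq> {}" if "e \<in> C" "f \<in> C" for e f
  proof (cases "e = f")
    case True
    then show ?thesis using pairs[OF that(1)] by fastforce
  qed (use adjacent that in blast)
  moreover have "\<exists>e\<in>C. v \<notin> e" for v using False by blast
  ultimately obtain t where t: "card t = 3" "C = triangle_edges t"
    using pairwise_intersecting_pairs_triangle[OF pairs] by blast
  have "triangle V E t"
    unfolding triangle_def
  proof (intro conjI ballI impI)
    show "t \<subseteq> V" using in_V Union_triangle_edges[OF t(1)] t(2) by blast
    show "card t = 3" by (fact t(1))
    fix u w assume "u \<in> t" "w \<in> t" "u \<noteq> w"
    then have "{u, w} \<in> C" unfolding t(2) triangle_edges_def by simp
    then show "{u, w} \<in> E" using CE by blast
  qed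
  then show ?thesis using t(2) by blast
qed

section \<open>Partitions into stars and triangles\<close>

lemma partition_on_block_eq:
  "partition_on A P \<Longrightarrow> p \<in> P \<Longrightarrow> q \<in> P \<Longrightarrow> x \<in> p \<Longrightarrow> x \<in> q \<Longrightarrow> p = q"
  using disjointD[OF partition_onD2] by blast

lemma independent_if_stars_in_partition:
  assumes G: "graph V E" and P: "partition_on E P"
    and S: "S \<subseteq> V" "\<forall>v\<in>S. star E v \<in> P" "inj_on (star E) S"
  shows "independent V E S"
  unfolding independent_def
proof (intro conjI ballI notI)
  show "S \<subseteq> V" by (fact S(1))
  fix u v assume uv: "u \<in> S" "v \<in> S" "{u, v} \<in> E"
  then have "{u, v} \<in> star E u" "{u, v} \<in> star E v" unfolding star_def by auto
  then have "star E u = star E v" using partition_on_block_eq[OF P] S(2) uv by blast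
  then have "u = v" using S(3) uv by (simp add: inj_on_eq_iff)
  then show False using G uv(3) unfolding graph_def by fastforce
qed

lemma triangle_decomposition_if_partition_into_stars_and_triangles:
  assumes P: "partition_on E P"
    and blocks: "\<forall>C\<in>P. (\<exists>v\<in>S. C = star E v) \<or> (\<exists>t. triangle V E t \<and> C = triangle_edges t)"
    and stars: "\<forall>v\<in>S. star E v \<in> P"
  shows "triangle_decomposition (del_vertices_V V S) (del_vertices_E E S)
           {t. triangle V E t \<and> triangle_edges t \<in> P}" (is "triangle_decomposition _ _ ?T")
proof -
  have avoids_S: "t \<inter> S = {}" if t: "t \<in> ?T" for t
  proof (rule ccontr)
    assume "t \<inter> S \<noteq> {}"
    then obtain s where s: "s \<in> t" "s \<in> S" by blast
    have t': "triangle V E t" "triangle_edges t \<in> P" using t by blast+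
    have card_t: "card t = 3" using t'(1) unfolding triangle_def by blast
    obtain e where "e \<in> triangle_edges t" "s \<in> e" using triangle_edges_through[OF card_t s(1)] by blast
    moreover have "e \<in> star E s" using triangle_edges_subset[OF t'(1)] calculation unfolding star_def by blast
    ultimately have "star E s = triangle_edges t"
      using partition_on_block_eq[OF P stars[rule_format, OF s(2)] t'(2)] by blast
    then show False using triangle_edges_avoiding[OF card_t, of s] unfolding star_def by blast
  qed
  have unique: "\<exists>!t. t \<in> ?T \<and> e \<in> triangle_edges t" if e: "e \<in> E" "e \<inter> S = {}" for e
  proof -
    obtain C where C: "C \<in> P" "e \<in> C" using partition_onD1[OF P] e(1) by blast
    then obtain t where t: "triangle V E t" "C = triangle_edges t"
      using blocks e(2) unfolding star_def by blast
    show ?thesis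
    proof (rule ex1I)
      show "t \<in> ?T \<and> e \<in> triangle_edges t" using t C by blast
      fix t' assume t': "t' \<in> ?T \<and> e \<in> triangle_edges t'"
      then have "triangle V E t'" "triangle_edges t' \<in> P" "e \<in> triangle_edges t'" by blast+
      then have "triangle_edges t' = triangle_edges t" using partition_on_block_eq[OF P] t C by blast
      then show "t' = t"
        using Union_triangle_edges \<open>triangle V E t'\<close> t(1) unfolding triangle_def by metis
    qed
  qed
  show ?thesis
    unfolding triangle_decomposition_def triangle_del_vertices_iff
  proof (intro conjI ballI)
    show "triangle V E t" "t \<inter> S = {}" if "t \<in> ?T" for t using that avoids_S by blast+
    show "\<exists>!t. t \<in> ?T \<and> e \<in> triangle_edges t" if "e \<in> del_vertices_E E S" for e
      using that unique unfolding del_vertices_E_def by blast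
  qed
qed

lemma independent_meets_edge_once:
  assumes "graph V E" "independent V E S" "e \<in> E" "u \<in> e \<inter> S" "v \<in> e \<inter> S"
  shows "u = v"
proof (rule ccontr)
  assume "u \<noteq> v"
  moreover have "card e = 2" using assms(1,3) unfolding graph_def by blast
  ultimately have "e = {u, v}" using assms(4,5) by (metis card_2_doubleton_cases insertE singletonD IntD1)
  then show False using assms(2-5) unfolding independent_def by blast
qed

lemma partition_on_stars_triangle_edges:
  assumes G: "graph V E" and S: "independent V E S" "\<forall>v\<in>S. star E v \<noteq> {}"
    and T: "triangle_decomposition (del_vertices_V V S) (del_vertices_E E S) T"
  shows "partition_on E (star E ` S \<union> triangle_edges ` T)" (is "partition_on E ?P")
proof -
  have T_triangle: "triangle V E t" "t \<inter> S = {}" if "t \<in> T" for t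
    using T that unfolding triangle_decomposition_def triangle_del_vertices_iff by blast+
  have unique: "\<exists>!t. t \<in> T \<and> e \<in> triangle_edges t" if "e \<in> E" "e \<inter> S = {}" for e
    using T that unfolding triangle_decomposition_def del_vertices_E_def by blast
  have edges_of_T: "e \<in> E" "e \<inter> S = {}" if "t \<in> T" "e \<in> triangle_edges t" for t e
    using that T_triangle triangle_edges_subset unfolding triangle_edges_def by blast+
  have centre_unique: "u = v" if "e \<in> star E u" "e \<in> star E v" "u \<in> S" "v \<in> S" for e u v
    using independent_meets_edge_once[OF G S(1)] that unfolding star_def by blast
  have blocks_cases: "(\<exists>v\<in>S. q = star E v) \<or> (\<exists>t\<in>T. q = triangle_edges t)" if "q \<in> ?P" for q
    using that by blast
  have star_block: "q = star E u" if "u \<in> S" "e \<in> star E u" "q \<in> ?P" "e \<in> q" for u e q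
    using blocks_cases[OF that(3)]
  proof (elim disjE bexE)
    fix v assume "v \<in> S" "q = star E v"
    then show ?thesis using centre_unique[of e u v] that by blast
  next
    fix t assume "t \<in> T" "q = triangle_edges t"
    then have "e \<inter> S = {}" using edges_of_T(2) that(4) by blast
    then show ?thesis using that(1,2) unfolding star_def by blast
  qed
  have triangle_block: "q = triangle_edges t" if "t \<in> T" "e \<in> triangle_edges t" "q \<in> ?P" "e \<in> q"
    for t e q
    using blocks_cases[OF that(3)]
  proof (elim disjE bexE)
    fix v assume "v \<in> S" "q = star E v"
    then show ?thesis using edges_of_T(2)[OF that(1,2)] that(4) unfolding star_def by blast
  next
    fix t' assume "t' \<in> T" "q = triangle_edges t'"
    then have "t' = t" using unique[OF edges_of_T[OF that(1,2)]] that by blast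
    then show ?thesis using \<open>q = triangle_edges t'\<close> by blast
  qed
  show ?thesis
  proof (rule partition_onI)
    show "\<Union>?P = E"
    proof
      show "\<Union>?P \<subseteq> E" using edges_of_T(1) unfolding star_def by blast
      show "E \<subseteq> \<Union>?P"
      proof
        fix e assume e: "e \<in> E"
        show "e \<in> \<Union>?P"
        proof (cases "e \<inter> S = {}")
          case True
          then show ?thesis using unique[OF e] by blast
        next
          case False
          then obtain s where "s \<in> S" "s \<in> e" by blast
          then show ?thesis using e unfolding star_def by blast
        qed
      qed
    qed
    show "disjnt p q" if "p \<in> ?P" "q \<in> ?P" "p \<noteq> q" for p q
    proof (rule ccontr)
      assume "\<not> disjnt p q"
      then obtain e where "e \<in> p" "e \<in> q" unfolding disjnt_def by blast
      then have "q = p"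
        using blocks_cases[OF that(1)] star_block[OF _ _ that(2)] triangle_block[OF _ _ that(2)] by blast
      then show False using that(3) by blast
    qed
    have "triangle_edges t \<noteq> {}" if "t \<in> T" for t
      using Union_triangle_edges[of t] T_triangle(1)[OF that] unfolding triangle_def by force
    then show "{} \<notin> ?P" using S(2) by blast
  qed
qed

lemma localizable_line_graph_if_decomposition:
  assumes G: "graph V E" and S: "independent V E S" "\<forall>v\<in>S. strong_vertex E v"
    and T: "\<forall>t\<in>\<T>. strong_triangle E t"
      "triangle_decomposition (del_vertices_V V S) (del_vertices_E E S) \<T>"
  shows "localizable E (line_graph_edges E)"
proof -
  have "star E v \<noteq> {}" if "v \<in> S" for v
    using strong_vertex_star_nonempty[OF graph_finite_edges[OF G] bspec[OF S(2) that]] .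
  then have "partition_on E (star E ` S \<union> triangle_edges ` \<T>)"
    by (intro partition_on_stars_triangle_edges[OF G S(1) _ T(2)]) blast
  moreover have "strong_clique E (line_graph_edges E) (star E v)" if "v \<in> S" for v
    using bspec[OF S(2) that] by (simp add: strong_clique_star_iff)
  moreover have "strong_clique E (line_graph_edges E) (triangle_edges t)" if "t \<in> \<T>" for t
  proof -
    have "triangle V E t"
      using T(2) that unfolding triangle_decomposition_def triangle_del_vertices_iff by blast
    then show ?thesis using strong_clique_triangle_edges_iff T(1) that by blast
  qed
  ultimately show ?thesis
    unfolding localizable_def by (intro exI[of _ "star E ` S \<union> triangle_edges ` \<T>"]) blast
qed

lemma decomposition_if_localizable_line_graph:
  assumes G: "graph V E" and "localizable E (line_graph_edges E)"
  shows "\<exists>S \<T>. independent V E S \<and> (\<forall>v\<in>S. strong_vertex E v)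
       \<and> (\<forall>t\<in>\<T>. strong_triangle E t)
       \<and> triangle_decomposition (del_vertices_V V S) (del_vertices_E E S) \<T>"
proof -
  obtain P where P: "partition_on E P" and strong: "\<forall>C\<in>P. strong_clique E (line_graph_edges E) C"
    using assms(2) unfolding localizable_def by blast
  define Q where "Q = {C \<in> P. \<exists>v. C = star E v}"
  \<comment> \<open>A block consisting of a single edge {u, v} is the star of both u and v; only one of
    them may enter S.\<close>
  obtain centre where centre: "\<forall>C\<in>Q. C = star E (centre C)"
    using bchoice[of Q "\<lambda>C v. C = star E v"] unfolding Q_def by blast
  define S where "S = centre ` Q"
  have stars: "\<forall>v\<in>S. star E v \<in> P" using centre unfolding S_def Q_def by auto
  have "inj_on (star E) S" using centre unfolding S_def by (intro inj_onI) auto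
  moreover have "S \<subseteq> V"
    using vertex_if_star_nonempty[OF G] stars partition_onD3[OF P] by (metis subsetI)
  ultimately have "independent V E S" using independent_if_stars_in_partition[OF G P _ stars] by blast
  moreover have "\<forall>v\<in>S. strong_vertex E v"
    using stars strong strong_clique_star_iff[of E] by blast
  moreover have "(\<exists>v\<in>S. C = star E v) \<or> (\<exists>t. triangle V E t \<and> C = triangle_edges t)"
    if C: "C \<in> P" for C
  proof -
    consider (star) v where "C = star E v" | (triangle) t where "triangle V E t" "C = triangle_edges t"
      using strong_clique_line_graph_cases[OF G bspec[OF strong C]] by blast
    then show ?thesis
    proof cases
      case star
      then have "C \<in> Q" using C unfolding Q_def by blast
      then show ?thesis using centre unfolding S_def by blast
    qed blast
  qed
  then have "triangle_decomposition (del_vertices_V V S) (del_vertices_E E S)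
      {t. triangle V E t \<and> triangle_edges t \<in> P}"
    using triangle_decomposition_if_partition_into_stars_and_triangles[OF P _ stars] by blast
  moreover have "\<forall>t\<in>{t. triangle V E t \<and> triangle_edges t \<in> P}. strong_triangle E t"
    using strong strong_clique_triangle_edges_iff by blast
  ultimately show ?thesis by blast
qed

theorem mainTheorem14:
  fixes V :: "'a set" and E :: "'a set set"
  assumes "graph V E"
  shows "localizable E (line_graph_edges E) \<longleftrightarrow>
    (\<exists>S \<T>. independent V E S \<and> (\<forall>v\<in>S. strong_vertex E v)
       \<and> (\<forall>t\<in>\<T>. strong_triangle E t)
       \<and> triangle_decomposition (del_vertices_V V S) (del_vertices_E E S) \<T>)"
  using decomposition_if_localizable_line_graph[OF assms]
    localizable_line_graph_if_decomposition[OF assms] by blast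

end
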